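(* Let $\varepsilon\in[0,1)$ and $\mathcal{P},\mathcal{E}\subseteq\mathcal{D}(P)$. Then $$\beta\overline{W}_{\mathrm{GPO},\varepsilon}(\mathcal{P},\mathcal{E})=D_{\min,\varepsilon}(\mathcal{P}\|\mathcal{E}).$$
   Context: All Hilbert spaces are finite-dimensional; $\mathcal{D}(P)$ is the set of density operators on $P$; $T(X,Y)=\tfrac12\|X-Y\|_1$. Battery: qubit $B$ with basis $\{|0\rangle,|1\rangle\}$, $\pi_M=(1-\tfrac1M)|0\rangle\langle0|+\tfrac1M|1\rangle\langle1|$ for $M>1$, and $\Pi_M=\{\pi_{M'}:M'\in[M,\infty)\}$ (dirty battery $(|1\rangle\langle1|,\Pi_M)$). The one-shot extractable work into a dirty battery under a class $\mathfrak{F}$ is $\beta\overline{W}_{\mathfrak{F},\varepsilon}(\mathcal{P},\mathcal{E})=\log\sup\{M>1:\exists\mathcal{F}\in\mathfrak{F}\text{ with }T(\mathcal{F}(\rho),|1\rangle\langle1|)\le\varepsilon\ \forall\rho\in\mathcal{P}\text{ and }\mathcal{F}(\tau)\in\Pi_M\ \forall\tau\in\mathcal{E}\}$. GPO here means the class of CPTP maps, Gibbs preservation being the condition $\mathcal{F}(\tau)\in\Pi_M$. The smoothed min-relative entropy between sets is $D_{\min,\varepsilon}(\mathcal{P}\|\mathcal{E})=-\log\min\{\sup_{\tau\in\mathcal{E}}\operatorname{tr}[\tau E]:0\le E\le I,\ \sup_{\rho\in\mathcal{P}}\operatorname{tr}[\rho(I-E)]\le\varepsilon\}$, with $-\log 0=+\infty$.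 *)

theory Defs
  imports "HOL-Analysis.Analysis" "Jordan_Normal_Form.Schur_Decomposition"
begin

definition mtrace :: "complex mat \<Rightarrow> complex" where
  "mtrace A = (\<Sum>i<dim_row A. A $$ (i,i))"

definition hermitian_mat :: "complex mat \<Rightarrow> bool" where
  "hermitian_mat A \<longleftrightarrow> mat_adjoint A = A"

definition psd :: "nat \<Rightarrow> complex mat \<Rightarrow> bool" where
  "psd n A \<longleftrightarrow> A \<in> carrier_mat n n \<and> hermitian_mat A \<and>
     (\<forall>v \<in> carrier_vec n. Re (conjugate v \<bullet> (A *\<^sub>v v)) \<ge> 0)"

definition density :: "nat \<Rightarrow> complex mat set" where
  "density d = {\<rho>. psd d \<rho> \<and> mtrace \<rho> = 1}"

definition psd_sqrt :: "nat \<Rightarrow> complex mat \<Rightarrow> complex mat" where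
  "psd_sqrt n B = (THE S. psd n S \<and> S * S = B)"

definition trace_norm :: "complex mat \<Rightarrow> real" where
  "trace_norm A = Re (mtrace (psd_sqrt (dim_col A) (mat_adjoint A * A)))"

definition trace_dist :: "complex mat \<Rightarrow> complex mat \<Rightarrow> real" where
  "trace_dist X Y = trace_norm (X - Y) / 2"

definition lin_map :: "nat \<Rightarrow> nat \<Rightarrow> (complex mat \<Rightarrow> complex mat) \<Rightarrow> bool" where
  "lin_map d n F \<longleftrightarrow>
     (\<forall>A \<in> carrier_mat d d. F A \<in> carrier_mat n n) \<and>
     (\<forall>A \<in> carrier_mat d d. \<forall>B \<in> carrier_mat d d. F (A + B) = F A + F B) \<and>
     (\<forall>A \<in> carrier_mat d d. \<forall>c. F (c \<cdot>\<^sub>m A) = c \<cdot>\<^sub>m F A)"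

text \<open>The (i,j) block of size d of a (k*d) x (k*d) matrix, and
  (id_k \<otimes> F) applied blockwise.\<close>
definition blk :: "nat \<Rightarrow> complex mat \<Rightarrow> nat \<Rightarrow> nat \<Rightarrow> complex mat" where
  "blk d X i j = mat d d (\<lambda>(a,b). X $$ (i*d + a, j*d + b))"

definition ampl :: "nat \<Rightarrow> nat \<Rightarrow> nat \<Rightarrow> (complex mat \<Rightarrow> complex mat) \<Rightarrow> complex mat \<Rightarrow> complex mat" where
  "ampl k d n F X = mat (k*n) (k*n)
     (\<lambda>(p,q). F (blk d X (p div n) (q div n)) $$ (p mod n, q mod n))"

definition completely_positive :: "nat \<Rightarrow> nat \<Rightarrow> (complex mat \<Rightarrow> complex mat) \<Rightarrow> bool" where
  "completely_positive d n F \<longleftrightarrow>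
     (\<forall>k. \<forall>X. psd (k*d) X \<longrightarrow> psd (k*n) (ampl k d n F X))"

definition trace_preserving :: "nat \<Rightarrow> (complex mat \<Rightarrow> complex mat) \<Rightarrow> bool" where
  "trace_preserving d F \<longleftrightarrow> (\<forall>A \<in> carrier_mat d d. mtrace (F A) = mtrace A)"

definition CPTP :: "nat \<Rightarrow> nat \<Rightarrow> (complex mat \<Rightarrow> complex mat) \<Rightarrow> bool" where
  "CPTP d n F \<longleftrightarrow> lin_map d n F \<and> completely_positive d n F \<and> trace_preserving d F"

definition ket1 :: "complex mat" where
  "ket1 = mat 2 2 (\<lambda>(i,j). if i = 1 \<and> j = 1 then 1 else 0)"

definition pi_M :: "real \<Rightarrow> complex mat" where
  "pi_M M = mat 2 2 (\<lambda>(i,j). if i = 0 \<and> j = 0 then complex_of_real (1 - 1/M)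
                             else if i = 1 \<and> j = 1 then complex_of_real (1/M) else 0)"

definition Pi_M :: "real \<Rightarrow> complex mat set" where
  "Pi_M M = {pi_M M' | M'. M' \<ge> M}"

definition elog :: "ereal \<Rightarrow> ereal" where
  "elog x = (if x = \<infinity> then \<infinity> else if x \<le> 0 then -\<infinity> else ereal (log 2 (real_of_ereal x)))"

text \<open>One-shot extractable work into the dirty battery under GPO (all CPTP maps),
  in units of beta.  Supremum of an empty set of M > 1 is taken as 1 (so log gives 0).\<close>
definition work_GPO :: "nat \<Rightarrow> real \<Rightarrow> complex mat set \<Rightarrow> complex mat set \<Rightarrow> ereal" where
  "work_GPO d \<epsilon> \<P> \<E> = elog (Sup ({1} \<union> {ereal M | M. M > 1 \<and>
      (\<exists>F. CPTP d 2 F \<and> (\<forall>\<rho> \<in> \<P>. trace_dist (F \<rho>) ket1 \<le> \<epsilon>)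
            \<and> (\<forall>\<tau> \<in> \<E>. F \<tau> \<in> Pi_M M))}))"

text \<open>Smoothed min-relative entropy between sets (sup over an empty set is 0, as
  the quantities are nonnegative).\<close>
definition Dmin :: "nat \<Rightarrow> real \<Rightarrow> complex mat set \<Rightarrow> complex mat set \<Rightarrow> ereal" where
  "Dmin d \<epsilon> \<P> \<E> = - elog (Inf {Sup ({0} \<union> {ereal (Re (mtrace (\<tau> * E))) | \<tau>. \<tau> \<in> \<E>}) | E.
      psd d E \<and> psd d (1\<^sub>m d - E) \<and>
      Sup ({0} \<union> {ereal (Re (mtrace (\<rho> * (1\<^sub>m d - E)))) | \<rho>. \<rho> \<in> \<P>}) \<le> ereal \<epsilon>})"

end

theory Submission
  imports Defs
begin

text \<open>Both sides are governed by two-outcome tests \<open>0 \<le> E \<le> I\<close>. A channel \<open>F\<close> into the battery yields,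
  in the Heisenberg picture, the test \<open>E = F\<^sup>\<dagger>(|1\<rangle>\<langle>1|)\<close>: \<open>tr (\<tau> E)\<close> is the weight \<open>1/M' \<le> 1/M\<close> of \<open>|1\<rangle>\<close>
  in \<open>F \<tau> = \<pi>\<^sub>M\<^sub>'\<close>, and \<open>tr (\<rho> (I - E))\<close> is the weight of \<open>|0\<rangle>\<close> in \<open>F \<rho>\<close>, which is at most
  \<open>T (F \<rho>, |1\<rangle>\<langle>1|)\<close>. Conversely, a test with \<open>tr (\<rho> (I - E)) \<le> \<epsilon>\<close> and \<open>tr (\<tau> E) \<le> q < 1/M\<close> gives a
  measure-and-prepare channel achieving \<open>M\<close>. Hence \<open>M\<close> is achievable if \<open>1/M\<close> exceeds the optimal
  type-II error and only if \<open>1/M\<close> is at least that error, which makes the two logarithms agree.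
  All positivity facts reduce to \<open>tr (A B) \<ge> 0\<close> for positive semidefinite \<open>A\<close>, \<open>B\<close>, proved by
  splitting off rank-one parts of \<open>A\<close> via Schur complements.\<close>

section \<open>Positive semidefinite matrices given by their entries\<close>

text \<open>An \<open>n\<times>n\<close> matrix is handled here through its entry function, restricted to indices below \<open>n\<close>;
  this keeps carrier side conditions out of the algebra.\<close>

definition qform :: "nat \<Rightarrow> (nat \<Rightarrow> nat \<Rightarrow> complex) \<Rightarrow> (nat \<Rightarrow> complex) \<Rightarrow> complex" where
  "qform n f v = (\<Sum>i<n. \<Sum>j<n. cnj (v i) * f i j * v j)"

definition hermitian_fun :: "nat \<Rightarrow> (nat \<Rightarrow> nat \<Rightarrow> complex) \<Rightarrow> bool" where
  "hermitian_fun n f \<longleftrightarrow> (\<forall>i<n. \<forall>j<n. f i j = cnj (f j i))"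

definition psd_fun :: "nat \<Rightarrow> (nat \<Rightarrow> nat \<Rightarrow> complex) \<Rightarrow> bool" where
  "psd_fun n f \<longleftrightarrow> hermitian_fun n f \<and> (\<forall>v. 0 \<le> Re (qform n f v))"

definition trace_prod :: "nat \<Rightarrow> (nat \<Rightarrow> nat \<Rightarrow> complex) \<Rightarrow> (nat \<Rightarrow> nat \<Rightarrow> complex) \<Rightarrow> complex" where
  "trace_prod n f g = (\<Sum>a<n. \<Sum>b<n. f b a * g a b)"

lemma hermitian_funD: "hermitian_fun n f \<Longrightarrow> i < n \<Longrightarrow> j < n \<Longrightarrow> f i j = cnj (f j i)"
  unfolding hermitian_fun_def by blast

lemma psd_fun_hermitian: "psd_fun n f \<Longrightarrow> hermitian_fun n f"
  unfolding psd_fun_def by blast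

lemma psd_fun_qform_nonneg: "psd_fun n f \<Longrightarrow> 0 \<le> Re (qform n f v)"
  unfolding psd_fun_def by blast

lemma psd_funI:
  "hermitian_fun n f \<Longrightarrow> (\<And>v. 0 \<le> Re (qform n f v)) \<Longrightarrow> psd_fun n f"
  unfolding psd_fun_def by blast

lemma sum_if_const_cond: "(\<Sum>j\<in>A. if P then g j else 0) = (if P then sum g A else 0)"
  by simp

lemma hermitian_fun_column_sum:
  assumes "hermitian_fun n f" "m < n"
  shows "(\<Sum>i<n. cnj (v i) * f i m) = cnj (\<Sum>j<n. f m j * v j)"
proof -
  have "cnj (v i) * f i m = cnj (f m i * v i)" if "i < n" for i
    using hermitian_funD[OF assms(1) that assms(2)] by simp
  then show ?thesis unfolding cnj_sum by (intro sum.cong) auto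
qed

lemma qform_add_unit:
  assumes "hermitian_fun n f" "m < n"
  shows "qform n f (\<lambda>i. v i + (if i = m then t else 0)) =
     qform n f v + t * cnj (\<Sum>j<n. f m j * v j) + cnj t * (\<Sum>j<n. f m j * v j) + cnj t * t * f m m"
proof -
  note col = hermitian_fun_column_sum[OF assms]
  have "cnj (v i + (if i = m then t else 0)) * f i j * (v j + (if j = m then t else 0)) =
      cnj (v i) * f i j * v j + (if j = m then cnj (v i) * f i m * t else 0)
      + (if i = m then cnj t * (f m j * v j) else 0)
      + (if i = m then if j = m then cnj t * t * f m m else 0 else 0)" for i j
    by (auto simp: algebra_simps)
  then have "qform n f (\<lambda>i. v i + (if i = m then t else 0)) =
      qform n f v + (\<Sum>i<n. cnj (v i) * f i m) * t + cnj t * (\<Sum>j<n. f m j * v j) + cnj t * t * f m m"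
    using assms(2) unfolding qform_def
    by (simp only: sum.distrib) (simp add: sum_distrib_left sum_distrib_right sum_if_const_cond)
  then show ?thesis
    unfolding col by (simp add: mult.commute)
qed

lemma qform_unit:
  assumes "j < n"
  shows "qform n f (\<lambda>i. if i = j then 1 else 0) = f j j"
proof -
  have "cnj (if i = j then 1 else 0) * f i k * (if k = j then 1 else 0) =
      (if i = j then if k = j then f j j else 0 else 0)" for i k
    by simp
  then show ?thesis
    unfolding qform_def using assms by (simp add: sum_if_const_cond)
qed

lemma psd_fun_diag:
  assumes "psd_fun n f" "j < n"
  shows "f j j = of_real (Re (f j j))" "0 \<le> Re (f j j)"
proof -
  have "f j j = cnj (f j j)" using hermitian_funD[OF psd_fun_hermitian[OF assms(1)] assms(2) assms(2)] .
  then show "f j j = of_real (Re (f j j))" by (metis Reals_cnj_iff of_real_Re)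
  show "0 \<le> Re (f j j)"
    using psd_fun_qform_nonneg[OF assms(1), of "\<lambda>i. if i = j then 1 else 0"]
    unfolding qform_unit[OF assms(2)] .
qed

text \<open>Otherwise the quadratic form of \<open>f\<close> is negative at \<open>e\<^sub>j - s f\<^sub>m\<^sub>j e\<^sub>m\<close> for large \<open>s > 0\<close>.\<close>
lemma psd_fun_zero_diag:
  assumes "psd_fun n f" "m < n" "f m m = 0" "j < n"
  shows "f m j = 0"
proof (rule ccontr)
  define u where "u = f m j"
  assume "f m j \<noteq> 0"
  then have u_pos: "cmod u > 0" unfolding u_def by simp
  define s where "s = (\<bar>Re (f j j)\<bar> + 1) / (2 * (cmod u)\<^sup>2)"
  define v where "v = (\<lambda>i::nat. if i = j then (1::complex) else 0)"
  have "(\<Sum>k<n. f m k * v k) = u"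
    unfolding v_def u_def using assms(4) by (simp add: if_distrib[of "(*) _"] cong: if_cong)
  have "0 \<le> Re (qform n f (\<lambda>i. v i + (if i = m then - of_real s * u else 0)))"
    using psd_fun_qform_nonneg[OF assms(1)] .
  also have "qform n f (\<lambda>i. v i + (if i = m then - of_real s * u else 0)) =
      f j j + (- of_real s * u) * cnj u + cnj (- of_real s * u) * u"
    using qform_add_unit[OF psd_fun_hermitian[OF assms(1)] assms(2), of v] qform_unit[OF assms(4)]
      \<open>(\<Sum>k<n. f m k * v k) = u\<close> assms(3)
    unfolding v_def by simp
  also have "\<dots> = f j j - 2 * of_real s * (u * cnj u)"
    by (simp add: algebra_simps)
  also have "u * cnj u = of_real ((cmod u)\<^sup>2)"
    by (simp only: complex_norm_square)
  finally have "0 \<le> Re (f j j) - 2 * s * (cmod u)\<^sup>2" by simp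
  moreover have "2 * s * (cmod u)\<^sup>2 = \<bar>Re (f j j)\<bar> + 1" unfolding s_def using u_pos by simp
  ultimately show False by linarith
qed

lemma psd_fun_schur_complement:
  assumes "psd_fun n f" "m < n" "f m m = of_real c" "c > 0"
  shows "psd_fun n (\<lambda>i j. f i j - f i m * f m j / of_real c)"
proof (rule psd_funI)
  have hf: "hermitian_fun n f" using psd_fun_hermitian[OF assms(1)] .
  show "hermitian_fun n (\<lambda>i j. f i j - f i m * f m j / of_real c)"
    unfolding hermitian_fun_def
  proof (intro allI impI)
    fix i j assume ij: "i < n" "j < n"
    show "f i j - f i m * f m j / of_real c = cnj (f j i - f j m * f m i / of_real c)"
      using hermitian_funD[OF hf ij] hermitian_funD[OF hf ij(1) assms(2)]
        hermitian_funD[OF hf ij(2) assms(2)]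
      by (simp add: mult.commute)
  qed
  fix v
  define u where "u = (\<Sum>j<n. f m j * v j)"
  note col = hermitian_fun_column_sum[OF hf assms(2), of v, folded u_def]
  have "qform n (\<lambda>i j. f i j - f i m * f m j / of_real c) v =
      qform n f v - (\<Sum>i<n. cnj (v i) * f i m) * (\<Sum>j<n. f m j * v j) / of_real c"
    unfolding qform_def sum_product sum_divide_distrib
    by (simp add: sum_subtractf[symmetric] algebra_simps)
  also have "\<dots> = qform n f (\<lambda>i. v i + (if i = m then - u / of_real c else 0))"
    unfolding qform_add_unit[OF hf assms(2)] col u_def[symmetric] assms(3)
    using assms(4) by (simp add: field_simps)
  finally show "0 \<le> Re (qform n (\<lambda>i j. f i j - f i m * f m j / of_real c) v)"
    using psd_fun_qform_nonneg[OF assms(1)] by simp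
qed

lemma trace_prod_schur_split:
  assumes "hermitian_fun n f" "m < n"
  shows "trace_prod n f g =
    trace_prod n (\<lambda>i j. f i j - f i m * f m j / of_real c) g + qform n g (\<lambda>a. cnj (f m a)) / of_real c"
proof -
  have "trace_prod n f g = trace_prod n (\<lambda>i j. f i j - f i m * f m j / of_real c) g
      + (\<Sum>a<n. \<Sum>b<n. f b m * f m a * g a b) / of_real c"
    unfolding trace_prod_def sum_divide_distrib
    by (simp add: sum.distrib[symmetric] algebra_simps add_divide_distrib)
  also have "(\<Sum>a<n. \<Sum>b<n. f b m * f m a * g a b) = qform n g (\<lambda>a. cnj (f m a))"
    unfolding qform_def
  proof (intro sum.cong refl)
    fix a b assume "b \<in> {..<n}"
    then have "f b m = cnj (f m b)" by (intro hermitian_funD[OF assms(1) _ assms(2)]) simp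
    then show "f b m * f m a * g a b = cnj (cnj (f m a)) * g a b * cnj (f m b)" by simp
  qed
  finally show ?thesis .
qed

text \<open>Induction on the size \<open>m\<close> of the leading block outside which \<open>f\<close> vanishes: a Schur
  complement step splits off the rank-one part \<open>f\<^sub>\<cdot>\<^sub>m f\<^sub>m\<^sub>\<cdot> / f\<^sub>m\<^sub>m\<close>, whose trace against \<open>g\<close> is a value
  of the quadratic form of \<open>g\<close>.\<close>
lemma trace_prod_psd_nonneg_block:
  assumes "psd_fun n f" "psd_fun n g" "m \<le> n"
    and "\<And>i j. i < n \<Longrightarrow> j < n \<Longrightarrow> m \<le> i \<or> m \<le> j \<Longrightarrow> f i j = 0"
  shows "0 \<le> Re (trace_prod n f g)"
  using assms(1,3,4)
proof (induction m arbitrary: f)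
  case 0
  then have "trace_prod n f g = 0" unfolding trace_prod_def by simp
  then show ?case by simp
next
  case (Suc m)
  have mn: "m < n" using Suc.prems(2) by simp
  have hf: "hermitian_fun n f" using psd_fun_hermitian[OF Suc.prems(1)] .
  define c where "c = Re (f m m)"
  have fc: "f m m = of_real c" and c0: "0 \<le> c"
    unfolding c_def using psd_fun_diag[OF Suc.prems(1) mn] by simp_all
  show ?case
  proof (cases "c = 0")
    case True
    then have "f m j = 0" "f j m = 0" if "j < n" for j
      using psd_fun_zero_diag[OF Suc.prems(1) mn _ that] hermitian_funD[OF hf that mn] fc by simp_all
    then have "f i j = 0" if "i < n" "j < n" "m \<le> i \<or> m \<le> j" for i j
      using Suc.prems(3)[OF that(1,2)] that by (cases "i = m \<or> j = m") auto
    then show ?thesis using Suc.IH[OF Suc.prems(1)] mn by simp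
  next
    case False
    then have c_pos: "c > 0" using c0 by simp
    define f' where "f' = (\<lambda>i j. f i j - f i m * f m j / of_real c)"
    have "f' i j = 0" if "i < n" "j < n" "m \<le> i \<or> m \<le> j" for i j
      using Suc.prems(3)[OF that(1,2)] Suc.prems(3)[OF that(1) mn] Suc.prems(3)[OF mn that(2)] that
        fc c_pos
      unfolding f'_def by (cases "i = m \<or> j = m") auto
    then have IH: "0 \<le> Re (trace_prod n f' g)"
      using Suc.IH[OF psd_fun_schur_complement[OF Suc.prems(1) mn fc c_pos, folded f'_def]] mn by simp
    have "Re (trace_prod n f g) = Re (trace_prod n f' g) + Re (qform n g (\<lambda>a. cnj (f m a))) / c"
      unfolding f'_def trace_prod_schur_split[OF hf mn, of g c] by simp
    then show ?thesis
      using IH psd_fun_qform_nonneg[OF assms(2)] c_pos by simp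
  qed
qed

lemma trace_prod_psd_nonneg: "psd_fun n f \<Longrightarrow> psd_fun n g \<Longrightarrow> 0 \<le> Re (trace_prod n f g)"
  using trace_prod_psd_nonneg_block[of n f g n] by simp

lemma trace_prod_cong:
  assumes "\<And>a b. a < n \<Longrightarrow> b < n \<Longrightarrow> K a b = K' a b"
    and "\<And>a b. a < n \<Longrightarrow> b < n \<Longrightarrow> W a b = W' a b"
  shows "trace_prod n K W = trace_prod n K' W'"
  unfolding trace_prod_def using assms by (intro sum.cong refl) auto

lemma trace_prod_diff_left: "trace_prod n (\<lambda>a b. K a b - K' a b) W = trace_prod n K W - trace_prod n K' W"
  unfolding trace_prod_def by (simp add: sum_subtractf[symmetric] left_diff_distrib)

lemma trace_prod_lincomb_left:
  "trace_prod n (\<lambda>a b. \<alpha> * K a b + \<beta> * K' a b) W = \<alpha> * trace_prod n K W + \<beta> * trace_prod n K' W"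
  unfolding trace_prod_def sum_distrib_left sum.distrib[symmetric]
  by (intro sum.cong refl) (simp add: algebra_simps)

lemma trace_prod_add_right: "trace_prod n K (\<lambda>a b. W a b + W' a b) = trace_prod n K W + trace_prod n K W'"
  unfolding trace_prod_def sum.distrib[symmetric] by (intro sum.cong refl) (simp add: distrib_left)

lemma trace_prod_scale_right: "trace_prod n K (\<lambda>a b. c * W a b) = c * trace_prod n K W"
  unfolding trace_prod_def sum_distrib_left by (intro sum.cong refl) (simp add: algebra_simps)

lemma trace_prod_sum_right: "trace_prod n K (\<lambda>a b. \<Sum>i\<in>I. W i a b) = (\<Sum>i\<in>I. trace_prod n K (W i))"
  unfolding trace_prod_def sum_distrib_left
  by (subst sum.swap) (intro sum.cong refl, rule sum.swap)

lemma trace_prod_sum_left: "(\<Sum>s\<in>I. trace_prod n (K s) W) = trace_prod n (\<lambda>a b. \<Sum>s\<in>I. K s a b) W"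
  unfolding trace_prod_def sum_distrib_right
  by (subst sum.swap) (intro sum.cong refl, rule sum.swap)

lemma trace_prod_id_left: "trace_prod n (\<lambda>a b. if a = b then 1 else 0) g = (\<Sum>a<n. g a a)"
  unfolding trace_prod_def by (simp add: if_distrib[of "\<lambda>x. x * _"] cong: if_cong)

lemma trace_prod_cnj:
  assumes "hermitian_fun n K" "\<And>a b. a < n \<Longrightarrow> b < n \<Longrightarrow> Y a b = cnj (Z b a)"
  shows "cnj (trace_prod n K Z) = trace_prod n K Y"
proof -
  have "cnj (K b a * Z a b) = K a b * Y b a" if "a < n" "b < n" for a b
    using hermitian_funD[OF assms(1) that] assms(2)[OF that(2,1)] by simp
  then have "cnj (trace_prod n K Z) = (\<Sum>a<n. \<Sum>b<n. K a b * Y b a)"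
    unfolding trace_prod_def cnj_sum by (intro sum.cong refl) auto
  also have "\<dots> = trace_prod n K Y" unfolding trace_prod_def by (rule sum.swap)
  finally show ?thesis .
qed

lemma qform_eq_trace_prod: "qform n f w = trace_prod n f (\<lambda>a b. w a * cnj (w b))"
  unfolding qform_def trace_prod_def
  by (subst sum.swap) (intro sum.cong refl, simp add: algebra_simps)

lemma psd_fun_cong:
  assumes "psd_fun n f" "\<And>i j. i < n \<Longrightarrow> j < n \<Longrightarrow> f i j = g i j"
  shows "psd_fun n g"
proof (rule psd_funI)
  show "hermitian_fun n g"
    using hermitian_funD[OF psd_fun_hermitian[OF assms(1)]] assms(2) unfolding hermitian_fun_def
    by metis
  fix v
  have "qform n g v = qform n f v"
    unfolding qform_def using assms(2) by (intro sum.cong refl) simp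
  then show "0 \<le> Re (qform n g v)" using psd_fun_qform_nonneg[OF assms(1)] by simp
qed

lemma psd_fun_lincomb:
  assumes "psd_fun n f" "psd_fun n g" "0 \<le> \<alpha>" "0 \<le> \<beta>"
  shows "psd_fun n (\<lambda>a b. of_real \<alpha> * f a b + of_real \<beta> * g a b)"
proof (rule psd_funI)
  have hf: "hermitian_fun n f" and hg: "hermitian_fun n g"
    using assms(1,2) by (simp_all add: psd_fun_hermitian)
  show "hermitian_fun n (\<lambda>a b. of_real \<alpha> * f a b + of_real \<beta> * g a b)"
    unfolding hermitian_fun_def
  proof (intro allI impI)
    fix i j assume ij: "i < n" "j < n"
    show "of_real \<alpha> * f i j + of_real \<beta> * g i j = cnj (of_real \<alpha> * f j i + of_real \<beta> * g j i)"
      using hermitian_funD[OF hf ij] hermitian_funD[OF hg ij] by simp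
  qed
  fix v
  have "qform n (\<lambda>a b. of_real \<alpha> * f a b + of_real \<beta> * g a b) v
      = of_real \<alpha> * qform n f v + of_real \<beta> * qform n g v"
    unfolding qform_def sum_distrib_left sum.distrib[symmetric]
    by (intro sum.cong refl) (simp add: algebra_simps)
  then show "0 \<le> Re (qform n (\<lambda>a b. of_real \<alpha> * f a b + of_real \<beta> * g a b) v)"
    using assms psd_fun_qform_nonneg by simp
qed

lemma psd_fun_scale: "psd_fun n f \<Longrightarrow> 0 \<le> \<alpha> \<Longrightarrow> psd_fun n (\<lambda>a b. of_real \<alpha> * f a b)"
  using psd_fun_lincomb[of n f f \<alpha> 0] by simp

lemma psd_fun_id: "psd_fun n (\<lambda>a b. if a = b then 1 else 0)"
proof (rule psd_funI)
  fix v
  have "qform n (\<lambda>a b. if a = b then 1 else 0) v = (\<Sum>i<n. of_real ((cmod (v i))\<^sup>2))"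
    unfolding qform_def complex_norm_square
    by (intro sum.cong refl) (simp add: if_distrib[of "\<lambda>x. x * _"] if_distrib[of "\<lambda>x. _ * x"] cong: if_cong)
  then show "0 \<le> Re (qform n (\<lambda>a b. if a = b then 1 else 0) v)"
    by (simp add: sum_nonneg)
qed (simp add: hermitian_fun_def)

lemma psd_fun_rank_one: "psd_fun n (\<lambda>a b. w a * cnj (w b))"
proof (rule psd_funI)
  fix u
  define z where "z = (\<Sum>a<n. cnj (u a) * w a)"
  have "qform n (\<lambda>a b. w a * cnj (w b)) u = z * cnj z"
    unfolding qform_def z_def cnj_sum sum_product by (intro sum.cong refl) (simp add: algebra_simps)
  then show "0 \<le> Re (qform n (\<lambda>a b. w a * cnj (w b)) u)" by simp
qed (simp add: hermitian_fun_def mult.commute)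

lemma block_index_less: "(i::nat) < k \<Longrightarrow> a < d \<Longrightarrow> a + i * d < k * d"
proof -
  assume "i < k" "a < d"
  then have "a + i * d < Suc i * d" by simp
  also have "\<dots> \<le> k * d" using \<open>i < k\<close> by (intro mult_right_mono) auto
  finally show ?thesis .
qed

lemma sum_swap_middle:
  "(\<Sum>i\<in>I. \<Sum>a\<in>A. \<Sum>j\<in>J. \<Sum>b\<in>B. f i a j b) = (\<Sum>a\<in>A. \<Sum>b\<in>B. \<Sum>i\<in>I. \<Sum>j\<in>J. f i a j b)"
  by (subst sum.swap) (intro sum.cong refl; subst sum.swap; intro sum.cong refl sum.swap)

lemma hermitian_fun_block_compression:
  assumes hx: "hermitian_fun (k*d) x"
  shows "hermitian_fun d (\<lambda>a b. \<Sum>i<k. \<Sum>j<k. cnj (v i) * v j * x (a + i*d) (b + j*d))"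
  unfolding hermitian_fun_def
proof (intro allI impI)
  fix a b assume ab: "a < d" "b < d"
  have "cnj (\<Sum>i<k. \<Sum>j<k. cnj (v i) * v j * x (b + i*d) (a + j*d)) =
        (\<Sum>i<k. \<Sum>j<k. v i * cnj (v j) * x (a + j*d) (b + i*d))"
    unfolding cnj_sum
  proof (intro sum.cong refl)
    fix i j assume "i \<in> {..<k}" "j \<in> {..<k}"
    then have "x (b + i*d) (a + j*d) = cnj (x (a + j*d) (b + i*d))"
      using hermitian_funD[OF hx, of "b + i*d" "a + j*d"] block_index_less ab by simp
    then show "cnj (cnj (v i) * v j * x (b + i*d) (a + j*d)) = v i * cnj (v j) * x (a + j*d) (b + i*d)"
      by simp
  qed
  also have "\<dots> = (\<Sum>j<k. \<Sum>i<k. v i * cnj (v j) * x (a + j*d) (b + i*d))"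
    by (rule sum.swap)
  finally show "(\<Sum>i<k. \<Sum>j<k. cnj (v i) * v j * x (a + i*d) (b + j*d)) =
      cnj (\<Sum>i<k. \<Sum>j<k. cnj (v i) * v j * x (b + i*d) (a + j*d))"
    by (simp add: mult.commute)
qed

text \<open>The quadratic form of the compression at \<open>w\<close> is that of \<open>x\<close> at \<open>v \<otimes> w\<close>.\<close>
lemma psd_fun_block_compression:
  assumes "psd_fun (k*d) x"
  shows "psd_fun d (\<lambda>a b. \<Sum>i<k. \<Sum>j<k. cnj (v i) * v j * x (a + i*d) (b + j*d))"
proof (rule psd_funI[OF hermitian_fun_block_compression[OF psd_fun_hermitian[OF assms]]])
  fix w
  define u where "u = (\<lambda>p. v (p div d) * w (p mod d))"
  have "qform (k*d) x u =
      (\<Sum>i<k. \<Sum>a<d. \<Sum>j<k. \<Sum>b<d. cnj (u (a + i*d)) * x (a + i*d) (b + j*d) * u (b + j*d))"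
    unfolding qform_def sum_mult_product ..
  also have "\<dots> =
      (\<Sum>i<k. \<Sum>a<d. \<Sum>j<k. \<Sum>b<d. cnj (v i * w a) * x (a + i*d) (b + j*d) * (v j * w b))"
    unfolding u_def by (intro sum.cong refl) auto
  also have "\<dots> =
      (\<Sum>a<d. \<Sum>b<d. \<Sum>i<k. \<Sum>j<k. cnj (v i * w a) * x (a + i*d) (b + j*d) * (v j * w b))"
    by (rule sum_swap_middle)
  also have "\<dots> = qform d (\<lambda>a b. \<Sum>i<k. \<Sum>j<k. cnj (v i) * v j * x (a + i*d) (b + j*d)) w"
    unfolding qform_def sum_distrib_left sum_distrib_right
    by (intro sum.cong refl) (simp add: algebra_simps)
  finally show "0 \<le> Re (qform d (\<lambda>a b. \<Sum>i<k. \<Sum>j<k. cnj (v i) * v j * x (a + i*d) (b + j*d)) w)"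
    using psd_fun_qform_nonneg[OF assms] by metis
qed

text \<open>Entries of \<open>id\<^sub>k \<otimes> \<Phi>\<close> applied to a \<open>k\<times>k\<close> block matrix \<open>x\<close>, where \<open>\<Phi> Y\<close> is the diagonal
  matrix \<open>diag (tr (K\<^sub>0 Y), \<dots>, tr (K\<^sub>n\<^sub>-\<^sub>1 Y))\<close>.\<close>
lemma hermitian_fun_measure_prepare_ampl:
  assumes hx: "hermitian_fun (k*d) x" and hK: "\<And>s. s < n \<Longrightarrow> hermitian_fun d (K s)"
  shows "hermitian_fun (k*n) (\<lambda>p q. if p mod n = q mod n
      then trace_prod d (K (p mod n)) (\<lambda>a b. x (a + p div n * d) (b + q div n * d)) else 0)"
  unfolding hermitian_fun_def
proof (intro allI impI)
  fix p q assume pq: "p < k*n" "q < k*n"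
  then have "n > 0" by (cases n) auto
  with pq have "p div n < k" "q div n < k" "q mod n < n"
    by (simp_all add: less_mult_imp_div_less)
  have "x (a + p div n * d) (b + q div n * d) = cnj (x (b + q div n * d) (a + p div n * d))"
    if "a < d" "b < d" for a b
    using hermitian_funD[OF hx, of "a + p div n * d" "b + q div n * d"] that
      block_index_less \<open>p div n < k\<close> \<open>q div n < k\<close> by simp
  then have "cnj (trace_prod d (K (q mod n)) (\<lambda>a b. x (a + q div n * d) (b + p div n * d))) =
      trace_prod d (K (q mod n)) (\<lambda>a b. x (a + p div n * d) (b + q div n * d))"
    by (intro trace_prod_cnj hK \<open>q mod n < n\<close>)
  then show "(if p mod n = q mod n
        then trace_prod d (K (p mod n)) (\<lambda>a b. x (a + p div n * d) (b + q div n * d)) else 0) =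
      cnj (if q mod n = p mod n
        then trace_prod d (K (q mod n)) (\<lambda>a b. x (a + q div n * d) (b + p div n * d)) else 0)"
    by simp
qed

lemma psd_fun_measure_prepare_ampl:
  assumes px: "psd_fun (k*d) x" and pK: "\<And>s. s < n \<Longrightarrow> psd_fun d (K s)"
  shows "psd_fun (k*n) (\<lambda>p q. if p mod n = q mod n
      then trace_prod d (K (p mod n)) (\<lambda>a b. x (a + p div n * d) (b + q div n * d)) else 0)"
    (is "psd_fun _ ?G")
proof (rule psd_funI)
  show "hermitian_fun (k*n) ?G"
    by (intro hermitian_fun_measure_prepare_ampl psd_fun_hermitian px pK)
  fix v
  define Z where "Z s = (\<lambda>a b. \<Sum>i<k. \<Sum>j<k. cnj (v (s + i*n)) * v (s + j*n) * x (a + i*d) (b + j*d))"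
    for s
  have "qform (k*n) ?G v =
      (\<Sum>i<k. \<Sum>s<n. \<Sum>j<k. \<Sum>t<n. cnj (v (s + i*n)) * ?G (s + i*n) (t + j*n) * v (t + j*n))"
    unfolding qform_def sum_mult_product ..
  also have "\<dots> = (\<Sum>s<n. \<Sum>t<n. \<Sum>i<k. \<Sum>j<k. cnj (v (s + i*n)) * ?G (s + i*n) (t + j*n) * v (t + j*n))"
    by (rule sum_swap_middle)
  also have "\<dots> = (\<Sum>s<n. \<Sum>i<k. \<Sum>j<k.
      cnj (v (s + i*n)) * trace_prod d (K s) (\<lambda>a b. x (a + i*d) (b + j*d)) * v (s + j*n))"
    by (simp add: sum_if_const_cond if_distrib[of "\<lambda>x. x * _"] if_distrib[of "\<lambda>x. _ * x"]
        cong: if_cong)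
  also have "\<dots> = (\<Sum>s<n. trace_prod d (K s) (Z s))"
    unfolding Z_def trace_prod_sum_right
    by (intro sum.cong refl) (simp add: trace_prod_scale_right[symmetric] mult.commute mult.left_commute)
  finally have "qform (k*n) ?G v = (\<Sum>s<n. trace_prod d (K s) (Z s))" .
  moreover have "0 \<le> Re (trace_prod d (K s) (Z s))" if "s < n" for s
    unfolding Z_def by (rule trace_prod_psd_nonneg[OF pK[OF that] psd_fun_block_compression[OF px]])
  ultimately show "0 \<le> Re (qform (k*n) ?G v)"
    by (auto intro!: sum_nonneg)
qed

section \<open>From matrices to their entries\<close>

lemma mat_adjoint_index:
  assumes "A \<in> carrier_mat n n" "i < n" "j < n"
  shows "mat_adjoint A $$ (i,j) = cnj (A $$ (j,i))"
  using assms unfolding mat_adjoint_def by (simp add: mat_of_rows_def)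

lemma mat_adjoint_carrier: "A \<in> carrier_mat n n \<Longrightarrow> mat_adjoint A \<in> carrier_mat n n"
  unfolding mat_adjoint_def by (simp add: mat_of_rows_def)

lemma hermitian_mat_iff:
  assumes "A \<in> carrier_mat n n"
  shows "hermitian_mat A \<longleftrightarrow> hermitian_fun n (\<lambda>i j. A $$ (i,j))"
proof
  assume "hermitian_mat A"
  then show "hermitian_fun n (\<lambda>i j. A $$ (i,j))"
    unfolding hermitian_mat_def hermitian_fun_def using mat_adjoint_index[OF assms]
    by (metis complex_cnj_cnj)
next
  assume h: "hermitian_fun n (\<lambda>i j. A $$ (i,j))"
  show "hermitian_mat A" unfolding hermitian_mat_def
  proof (rule eq_matI)
    fix i j assume "i < dim_row A" "j < dim_col A"
    then show "mat_adjoint A $$ (i, j) = A $$ (i, j)"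
      using mat_adjoint_index[OF assms] assms hermitian_funD[OF h] by (metis carrier_matD)
  qed (use assms mat_adjoint_carrier[OF assms] in auto)
qed

lemma qform_mat:
  assumes "A \<in> carrier_mat n n" "v \<in> carrier_vec n"
  shows "conjugate v \<bullet> (A *\<^sub>v v) = qform n (\<lambda>i j. A $$ (i,j)) (\<lambda>i. v $ i)"
  using assms unfolding qform_def scalar_prod_def
  by (auto simp: sum_distrib_left mult.assoc row_def scalar_prod_def lessThan_atLeast0 intro!: sum.cong)

lemma psd_iff_psd_fun: "psd n A \<longleftrightarrow> A \<in> carrier_mat n n \<and> psd_fun n (\<lambda>i j. A $$ (i,j))"
proof (cases "A \<in> carrier_mat n n")
  case True
  have "(\<forall>v \<in> carrier_vec n. 0 \<le> Re (conjugate v \<bullet> (A *\<^sub>v v))) \<longleftrightarrow>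
      (\<forall>v. 0 \<le> Re (qform n (\<lambda>i j. A $$ (i,j)) v))"
  proof
    assume nonneg: "\<forall>v \<in> carrier_vec n. 0 \<le> Re (conjugate v \<bullet> (A *\<^sub>v v))"
    show "\<forall>v. 0 \<le> Re (qform n (\<lambda>i j. A $$ (i,j)) v)"
    proof
      fix v :: "nat \<Rightarrow> complex"
      have "qform n (\<lambda>i j. A $$ (i,j)) v = qform n (\<lambda>i j. A $$ (i,j)) (\<lambda>i. vec n v $ i)"
        unfolding qform_def by (intro sum.cong refl) auto
      also have "\<dots> = conjugate (vec n v) \<bullet> (A *\<^sub>v vec n v)"
        using qform_mat[OF True vec_carrier] by simp
      finally show "0 \<le> Re (qform n (\<lambda>i j. A $$ (i,j)) v)"
        using nonneg vec_carrier by metis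
    qed
  qed (use qform_mat[OF True] in auto)
  then show ?thesis
    unfolding psd_def psd_fun_def using hermitian_mat_iff[OF True] True by blast
qed (simp add: psd_def)

lemma psd_mat_of_fun: "psd_fun n f \<Longrightarrow> psd n (mat n n (\<lambda>(i,j). f i j))"
  unfolding psd_iff_psd_fun by (auto elim: psd_fun_cong)

lemma mtrace_carrier: "A \<in> carrier_mat n n \<Longrightarrow> mtrace A = (\<Sum>i<n. A $$ (i,i))"
  unfolding mtrace_def by simp

lemma mtrace_mult:
  assumes "A \<in> carrier_mat n n" "B \<in> carrier_mat n n"
  shows "mtrace (A * B) = trace_prod n (\<lambda>i j. B $$ (i,j)) (\<lambda>i j. A $$ (i,j))"
  using assms unfolding mtrace_def trace_prod_def scalar_prod_def
  by (auto simp: row_def col_def mult.commute scalar_prod_def lessThan_atLeast0 intro!: sum.cong)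

lemma mtrace_mult_one_minus:
  assumes "Y \<in> carrier_mat d d" "E \<in> carrier_mat d d"
  shows "mtrace (Y * (1\<^sub>m d - E)) = mtrace Y - mtrace (Y * E)"
proof -
  have "mtrace (Y * (1\<^sub>m d - E)) =
      trace_prod d (\<lambda>a b. (if a = b then 1 else 0) - E $$ (a,b)) (\<lambda>a b. Y $$ (a,b))"
    unfolding mtrace_mult[OF assms(1) minus_carrier_mat[OF assms(2)]]
    using assms(2) by (intro trace_prod_cong) auto
  then show ?thesis
    unfolding trace_prod_diff_left trace_prod_id_left mtrace_mult[OF assms] mtrace_carrier[OF assms(1)] .
qed

lemma densityD:
  assumes "\<rho> \<in> density d"
  shows "\<rho> \<in> carrier_mat d d" "psd_fun d (\<lambda>a b. \<rho> $$ (a,b))" "(\<Sum>a<d. \<rho> $$ (a,a)) = 1"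
  using assms mtrace_carrier[of \<rho> d] unfolding density_def psd_iff_psd_fun by auto

lemma mtrace_density_psd_nonneg: "\<rho> \<in> density d \<Longrightarrow> psd d A \<Longrightarrow> 0 \<le> Re (mtrace (\<rho> * A))"
  using densityD(1,2) mtrace_mult trace_prod_psd_nonneg unfolding psd_iff_psd_fun by metis

section \<open>Trace distance to the charged battery state\<close>

lemma sum_less_2: "(\<Sum>i<(2::nat). f i) = f 0 + f 1"
  by (simp add: numeral_2_eq_2)

lemma less_2_cases: "(i::nat) < 2 \<longleftrightarrow> i = 0 \<or> i = 1"
  by auto

lemma mult_mat_2_index:
  assumes "A \<in> carrier_mat 2 2" "B \<in> carrier_mat 2 2" "i < 2" "j < 2"
  shows "(A * B) $$ (i,j) = A $$ (i,0) * B $$ (0,j) + A $$ (i,1) * B $$ (1,j)"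
  using assms by (simp add: scalar_prod_def row_def col_def atLeast0LessThan sum_less_2)

lemma psd_2_square_scalar_unique:
  assumes S: "psd 2 S" "S * S = of_real c \<cdot>\<^sub>m 1\<^sub>m 2" and c: "0 \<le> c"
  shows "S = of_real (sqrt c) \<cdot>\<^sub>m 1\<^sub>m 2"
proof -
  have Sc: "S \<in> carrier_mat 2 2" and pf: "psd_fun 2 (\<lambda>i j. S $$ (i,j))"
    using S(1) unfolding psd_iff_psd_fun by auto
  define p where "p = Re (S $$ (0,0))"
  define r where "r = Re (S $$ (1,1))"
  define s where "s = S $$ (0,1)"
  have Sp: "S $$ (0,0) = of_real p" and p0: "0 \<le> p"
    using psd_fun_diag[OF pf, of 0] unfolding p_def by auto
  have Sr: "S $$ (1,1) = of_real r" and r0: "0 \<le> r"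
    using psd_fun_diag[OF pf, of 1] unfolding r_def by auto
  have Ss: "S $$ (1,0) = cnj s"
    unfolding s_def using hermitian_funD[OF psd_fun_hermitian[OF pf], of 1 0] by simp
  have sq: "(S * S) $$ (i,j) = (if i = j then of_real c else 0)" if "i < 2" "j < 2" for i j
    using S(2) that by simp
  have s0: "s = 0"
  proof (cases "p + r = 0")
    case True
    then have "p = 0" using p0 r0 by simp
    then show ?thesis using psd_fun_zero_diag[OF pf, of 0 1] Sp unfolding s_def by simp
  next
    case False
    have "s * of_real (p + r) = 0"
      using sq[of 0 1] mult_mat_2_index[OF Sc Sc, of 0 1] unfolding Sp Sr s_def[symmetric]
      by (simp add: algebra_simps)
    then show ?thesis using False by (metis mult_eq_0_iff of_real_eq_0_iff)
  qed
  have "of_real (p * p) = (of_real c :: complex)"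
    using sq[of 0 0] mult_mat_2_index[OF Sc Sc, of 0 0] unfolding Sp s_def[symmetric] s0 by simp
  then have "p = sqrt c" using p0 by (metis of_real_eq_iff real_sqrt_abs abs_of_nonneg power2_eq_square)
  moreover have "of_real (r * r) = (of_real c :: complex)"
    using sq[of 1 1] mult_mat_2_index[OF Sc Sc, of 1 1] unfolding Sr Ss s0 by simp
  then have "r = sqrt c" using r0 by (metis of_real_eq_iff real_sqrt_abs abs_of_nonneg power2_eq_square)
  ultimately show ?thesis
    using Sc Sp Sr Ss s0 unfolding s_def by (auto simp: less_2_cases intro!: eq_matI)
qed

lemma psd_sqrt_scalar_2:
  assumes "0 \<le> c"
  shows "psd_sqrt 2 (of_real c \<cdot>\<^sub>m 1\<^sub>m 2) = of_real (sqrt c) \<cdot>\<^sub>m 1\<^sub>m 2"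
  unfolding psd_sqrt_def
proof (rule the_equality)
  have "psd_fun 2 (\<lambda>a b. of_real (sqrt c) * (if a = b then 1 else 0))"
    using assms by (intro psd_fun_scale psd_fun_id) simp
  then have "psd_fun 2 (\<lambda>i j. (of_real (sqrt c) \<cdot>\<^sub>m 1\<^sub>m 2 :: complex mat) $$ (i,j))"
    by (rule psd_fun_cong) simp
  moreover have "(of_real (sqrt c) \<cdot>\<^sub>m 1\<^sub>m 2) * (of_real (sqrt c) \<cdot>\<^sub>m 1\<^sub>m 2) = (of_real c \<cdot>\<^sub>m 1\<^sub>m 2 :: complex mat)"
    using assms by (auto simp: less_2_cases mult_mat_2_index simp flip: of_real_mult intro!: eq_matI)
  ultimately show "psd 2 (of_real (sqrt c) \<cdot>\<^sub>m 1\<^sub>m 2) \<and>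
      (of_real (sqrt c) \<cdot>\<^sub>m 1\<^sub>m 2) * (of_real (sqrt c) \<cdot>\<^sub>m 1\<^sub>m 2) = (of_real c \<cdot>\<^sub>m 1\<^sub>m 2 :: complex mat)"
    unfolding psd_iff_psd_fun by simp
qed (use psd_2_square_scalar_unique assms in blast)

text \<open>\<open>A = R - |1\<rangle>\<langle>1|\<close> is Hermitian and traceless, so \<open>A\<^sup>\<dagger> A = A\<^sup>2 = (a\<^sup>2 + |b|\<^sup>2) I\<close>.\<close>
lemma trace_dist_ket1:
  assumes R: "R \<in> carrier_mat 2 2" "hermitian_mat R" "mtrace R = 1"
  shows "trace_dist R ket1 = sqrt ((Re (R $$ (0,0)))\<^sup>2 + (cmod (R $$ (0,1)))\<^sup>2)"
proof -
  define a where "a = Re (R $$ (0,0))"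
  define b where "b = R $$ (0,1)"
  define c where "c = a\<^sup>2 + (cmod b)\<^sup>2"
  define A where "A = R - ket1"
  have ket1: "ket1 \<in> carrier_mat 2 2" "\<And>i j. i < 2 \<Longrightarrow> j < 2 \<Longrightarrow> ket1 $$ (i,j) = (if i = 1 \<and> j = 1 then 1 else 0)"
    unfolding ket1_def by simp_all
  have Ac: "A \<in> carrier_mat 2 2" unfolding A_def by (rule minus_carrier_mat[OF ket1(1)])
  have hR: "hermitian_fun 2 (\<lambda>i j. R $$ (i,j))" using hermitian_mat_iff[OF R(1)] R(2) by blast
  have Ra: "R $$ (0,0) = of_real a"
    unfolding a_def using hermitian_funD[OF hR, of 0 0] by (metis Reals_cnj_iff of_real_Re zero_less_numeral)
  have "R $$ (0,0) + R $$ (1,1) = 1" using R(3) mtrace_carrier[OF R(1)] by (simp add: sum_less_2)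
  then have A00: "A $$ (0,0) = of_real a" and A11: "A $$ (1,1) = - of_real a"
    unfolding A_def using R(1) ket1 Ra by (simp_all add: algebra_simps)
  have A01: "A $$ (0,1) = b" and A10: "A $$ (1,0) = cnj b"
    unfolding A_def b_def using R(1) ket1 hermitian_funD[OF hR, of 1 0] by simp_all
  have hA: "mat_adjoint A = A"
    using hermitian_mat_iff[OF Ac] A00 A11 A01 A10 unfolding hermitian_mat_def hermitian_fun_def
    by (auto simp: less_2_cases)
  have bb: "b * cnj b = of_real ((cmod b)\<^sup>2)" by (simp only: complex_norm_square)
  have "mat_adjoint A * A = of_real c \<cdot>\<^sub>m 1\<^sub>m 2"
  proof (rule eq_matI)
    fix i j assume "i < dim_row (of_real c \<cdot>\<^sub>m 1\<^sub>m 2 :: complex mat)" "j < dim_col (of_real c \<cdot>\<^sub>m 1\<^sub>m 2 :: complex mat)"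
    then have ij: "i < 2" "j < 2" by auto
    show "(mat_adjoint A * A) $$ (i,j) = (of_real c \<cdot>\<^sub>m 1\<^sub>m 2) $$ (i,j)"
      unfolding hA mult_mat_2_index[OF Ac Ac ij] c_def using ij A00 A11 A01 A10 bb
      by (auto simp: less_2_cases power2_eq_square algebra_simps)
  qed (use Ac in \<open>auto simp: hA\<close>)
  then have "trace_norm A = Re (mtrace (of_real (sqrt c) \<cdot>\<^sub>m 1\<^sub>m 2 :: complex mat))"
    unfolding trace_norm_def using Ac psd_sqrt_scalar_2[of c] by (simp add: c_def)
  also have "\<dots> = 2 * sqrt c" by (simp add: mtrace_carrier[of _ 2] sum_less_2)
  finally show ?thesis unfolding trace_dist_def A_def[symmetric] c_def a_def b_def by simp
qed

lemma trace_dist_pi_M_ket1: "trace_dist (pi_M (1 / x)) ket1 = \<bar>1 - x\<bar>"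
proof -
  have "pi_M (1 / x) \<in> carrier_mat 2 2" "mtrace (pi_M (1 / x)) = 1"
    by (simp_all add: pi_M_def mtrace_carrier[of _ 2] sum_less_2)
  moreover have "hermitian_mat (pi_M (1 / x))"
    unfolding hermitian_mat_iff[OF \<open>pi_M (1 / x) \<in> carrier_mat 2 2\<close>] hermitian_fun_def
    by (simp add: pi_M_def less_2_cases)
  ultimately show ?thesis
    by (simp add: trace_dist_ket1 pi_M_def)
qed

section \<open>Channels into the battery and their effects\<close>

lemma lin_mapD:
  assumes "lin_map d n F"
  shows "\<And>A. A \<in> carrier_mat d d \<Longrightarrow> F A \<in> carrier_mat n n"
    "\<And>A B. A \<in> carrier_mat d d \<Longrightarrow> B \<in> carrier_mat d d \<Longrightarrow> F (A + B) = F A + F B"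
    "\<And>A c. A \<in> carrier_mat d d \<Longrightarrow> F (c \<cdot>\<^sub>m A) = c \<cdot>\<^sub>m F A"
  using assms unfolding lin_map_def by blast+

definition mat_unit :: "nat \<Rightarrow> nat \<Rightarrow> nat \<Rightarrow> complex mat" where
  "mat_unit d a b = mat d d (\<lambda>(x,y). if x = a \<and> y = b then 1 else 0)"

definition mat_restrict :: "nat \<Rightarrow> complex mat \<Rightarrow> (nat \<times> nat) set \<Rightarrow> complex mat" where
  "mat_restrict d X S = mat d d (\<lambda>p. if p \<in> S then X $$ p else 0)"

lemma lin_map_mat_restrict:
  assumes F: "lin_map d n F" and "finite S" "S \<subseteq> {..<d} \<times> {..<d}" "i < n" "j < n"
  shows "F (mat_restrict d X S) $$ (i,j) = (\<Sum>p\<in>S. X $$ p * F (mat_unit d (fst p) (snd p)) $$ (i,j))"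
  using assms(2,3)
proof (induction S rule: finite_induct)
  case empty
  have "mat_restrict d X {} = 0 \<cdot>\<^sub>m 0\<^sub>m d d" by (rule eq_matI) (auto simp: mat_restrict_def)
  then have "F (mat_restrict d X {}) = 0 \<cdot>\<^sub>m F (0\<^sub>m d d)"
    by (simp only: lin_mapD(3)[OF F zero_carrier_mat])
  then show ?case using lin_mapD(1)[OF F, of "0\<^sub>m d d"] assms(4,5) by simp
next
  case (insert p S)
  obtain a b where p: "p = (a,b)" by force
  have carriers: "mat_restrict d X S \<in> carrier_mat d d" "mat_unit d a b \<in> carrier_mat d d"
    "X $$ p \<cdot>\<^sub>m mat_unit d a b \<in> carrier_mat d d"
    unfolding mat_restrict_def mat_unit_def by simp_all
  have "mat_restrict d X (insert p S) = mat_restrict d X S + X $$ p \<cdot>\<^sub>m mat_unit d a b"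
    by (rule eq_matI) (use insert.hyps p in \<open>auto simp: mat_restrict_def mat_unit_def\<close>)
  then have "F (mat_restrict d X (insert p S)) = F (mat_restrict d X S) + X $$ p \<cdot>\<^sub>m F (mat_unit d a b)"
    using lin_mapD(2,3)[OF F] carriers by simp
  then have "F (mat_restrict d X (insert p S)) $$ (i,j) =
      F (mat_restrict d X S) $$ (i,j) + X $$ p * F (mat_unit d a b) $$ (i,j)"
    using lin_mapD(1)[OF F carriers(1)] lin_mapD(1)[OF F carriers(2)] assms(4,5) by simp
  then show ?case using insert p by simp
qed

lemma lin_map_expand:
  assumes "lin_map d n F" "X \<in> carrier_mat d d" "i < n" "j < n"
  shows "F X $$ (i,j) = (\<Sum>a<d. \<Sum>b<d. X $$ (a,b) * F (mat_unit d a b) $$ (i,j))"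
proof -
  have "mat_restrict d X ({..<d} \<times> {..<d}) = X"
    by (rule eq_matI) (use assms(2) in \<open>auto simp: mat_restrict_def\<close>)
  then show ?thesis
    using lin_map_mat_restrict[OF assms(1) _ _ assms(3,4), of "{..<d} \<times> {..<d}" X]
    by (simp add: sum.cartesian_product split_beta)
qed

lemma completely_positive_psd:
  assumes "lin_map d n F" "completely_positive d n F" "psd d X"
  shows "psd n (F X)"
proof -
  have X: "X \<in> carrier_mat d d" using assms(3) unfolding psd_def by blast
  have FX: "F X \<in> carrier_mat n n" using lin_mapD(1)[OF assms(1) X] .
  have "blk d X 0 0 = X" by (rule eq_matI) (use X in \<open>auto simp: blk_def\<close>)
  then have "ampl 1 d n F X = F X"
    by (intro eq_matI) (use FX in \<open>auto simp: ampl_def\<close>)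
  then show ?thesis using assms(2,3) unfolding completely_positive_def by (metis mult_1)
qed

lemma CPTP_density:
  assumes "CPTP d n F" "\<rho> \<in> density d"
  shows "psd n (F \<rho>)" "mtrace (F \<rho>) = 1"
  using assms completely_positive_psd[of d n F \<rho>]
  unfolding CPTP_def density_def trace_preserving_def psd_def by auto

text \<open>The effect \<open>F\<^sup>\<dagger>(|1\<rangle>\<langle>1|)\<close> of the charged state in the Heisenberg picture, written as a Hermitian
  part so that it is visibly Hermitian without first showing that \<open>F\<close> preserves Hermiticity.\<close>
definition charged_effect :: "nat \<Rightarrow> (complex mat \<Rightarrow> complex mat) \<Rightarrow> complex mat" where
  "charged_effect d F = mat d d (\<lambda>(x,y).
     (F (mat_unit d y x) $$ (1,1) + cnj (F (mat_unit d x y) $$ (1,1))) / 2)"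

lemma charged_effect_carrier: "charged_effect d F \<in> carrier_mat d d"
  unfolding charged_effect_def by simp

lemma trace_charged_effect:
  assumes F: "lin_map d 2 F" and Y: "Y \<in> carrier_mat d d" "hermitian_fun d (\<lambda>a b. Y $$ (a,b))"
  shows "Re (mtrace (Y * charged_effect d F)) = Re (F Y $$ (1,1))"
proof -
  define e where "e a b = F (mat_unit d a b) $$ (1,1)" for a b
  define T where "T = (\<Sum>a<d. \<Sum>b<d. Y $$ (a,b) * e a b)"
  define S where "S = (\<Sum>a<d. \<Sum>b<d. cnj (e b a) * Y $$ (a,b))"
  have "mtrace (Y * charged_effect d F) = (T + S) / 2"
    unfolding mtrace_mult[OF Y(1) charged_effect_carrier] trace_prod_def T_def S_def e_def
      sum_divide_distrib sum.distrib[symmetric]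
    by (intro sum.cong refl) (simp add: charged_effect_def algebra_simps add_divide_distrib)
  then have "Re (mtrace (Y * charged_effect d F)) = (Re T + Re S) / 2"
    by (simp only: Re_divide_numeral plus_complex.sel(1))
  moreover have "cnj S = T"
  proof -
    have "cnj (cnj (e b a) * Y $$ (a,b)) = e b a * Y $$ (b,a)" if "a < d" "b < d" for a b
      using hermitian_funD[OF Y(2) that] by simp
    then have "cnj S = (\<Sum>a<d. \<Sum>b<d. e b a * Y $$ (b,a))"
      unfolding S_def cnj_sum by (intro sum.cong refl) auto
    also have "\<dots> = T" unfolding T_def by (subst sum.swap) (simp add: mult.commute)
    finally show ?thesis .
  qed
  then have "Re S = Re T" by (metis complex_cnj_cnj cnj.simps(1))
  moreover have "F Y $$ (1,1) = T"
    unfolding T_def e_def using lin_map_expand[OF F Y(1), of 1 1] by simp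
  ultimately show ?thesis by simp
qed

definition ket_bra :: "nat \<Rightarrow> (nat \<Rightarrow> complex) \<Rightarrow> complex mat" where
  "ket_bra d w = mat d d (\<lambda>(a,b). w a * cnj (w b))"

lemma ket_bra_carrier: "ket_bra d w \<in> carrier_mat d d"
  unfolding ket_bra_def by simp

lemma ket_bra_psd: "psd d (ket_bra d w)"
  unfolding ket_bra_def by (rule psd_mat_of_fun[OF psd_fun_rank_one])

lemma qform_ket_bra:
  assumes "A \<in> carrier_mat d d"
  shows "qform d (\<lambda>a b. A $$ (a,b)) w = mtrace (ket_bra d w * A)"
  unfolding qform_eq_trace_prod mtrace_mult[OF ket_bra_carrier assms]
  by (rule trace_prod_cong) (simp_all add: ket_bra_def)

lemma psd_by_ket_bra:
  assumes "A \<in> carrier_mat d d" "hermitian_fun d (\<lambda>a b. A $$ (a,b))"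
    and "\<And>w. 0 \<le> Re (mtrace (ket_bra d w * A))"
  shows "psd d A"
  unfolding psd_iff_psd_fun using assms by (auto intro!: psd_funI simp: qform_ket_bra)

lemma charged_effect_hermitian: "hermitian_fun d (\<lambda>a b. charged_effect d F $$ (a,b))"
  unfolding hermitian_fun_def charged_effect_def by (simp add: add.commute)

lemma trace_charged_effect_complement:
  assumes F: "lin_map d 2 F" "trace_preserving d F"
    and Y: "Y \<in> carrier_mat d d" "hermitian_fun d (\<lambda>a b. Y $$ (a,b))"
  shows "Re (mtrace (Y * (1\<^sub>m d - charged_effect d F))) = Re (F Y $$ (0,0))"
proof -
  have "mtrace Y = F Y $$ (0,0) + F Y $$ (1,1)"
    using F(2) Y(1) mtrace_carrier[OF lin_mapD(1)[OF F(1) Y(1)]]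
    unfolding trace_preserving_def by (simp add: sum_less_2)
  then show ?thesis
    using trace_charged_effect[OF F(1) Y] mtrace_mult_one_minus[OF Y(1) charged_effect_carrier]
    by simp
qed

lemma charged_effect_psd:
  assumes "CPTP d 2 F"
  shows "psd d (charged_effect d F)" "psd d (1\<^sub>m d - charged_effect d F)"
proof -
  have F: "lin_map d 2 F" "trace_preserving d F" "completely_positive d 2 F"
    using assms unfolding CPTP_def by simp_all
  have E: "charged_effect d F \<in> carrier_mat d d" by (rule charged_effect_carrier)
  have P: "ket_bra d w \<in> carrier_mat d d" "hermitian_fun d (\<lambda>a b. ket_bra d w $$ (a,b))"
    "psd_fun 2 (\<lambda>i j. F (ket_bra d w) $$ (i,j))" for w
    using ket_bra_psd[of d w] completely_positive_psd[OF F(1,3) ket_bra_psd]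
    unfolding psd_iff_psd_fun psd_fun_def by simp_all
  show "psd d (charged_effect d F)"
    using psd_fun_diag(2)[OF P(3), of 1]
    by (intro psd_by_ket_bra E charged_effect_hermitian) (simp add: trace_charged_effect[OF F(1) P(1,2)])
  have "hermitian_fun d (\<lambda>a b. (1\<^sub>m d - charged_effect d F) $$ (a,b))"
    unfolding hermitian_fun_def
  proof (intro allI impI)
    fix a b assume "a < d" "b < d"
    then show "(1\<^sub>m d - charged_effect d F) $$ (a,b) = cnj ((1\<^sub>m d - charged_effect d F) $$ (b,a))"
      using hermitian_funD[OF charged_effect_hermitian \<open>a < d\<close> \<open>b < d\<close>] E by simp
  qed
  then show "psd d (1\<^sub>m d - charged_effect d F)"
    using psd_fun_diag(2)[OF P(3), of 0]
    by (intro psd_by_ket_bra minus_carrier_mat E)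
      (simp_all add: trace_charged_effect_complement[OF F(1,2) P(1,2)])
qed

lemma charged_effect_density:
  assumes "CPTP d 2 F" "\<rho> \<in> density d"
  shows "Re (mtrace (\<rho> * charged_effect d F)) = Re (F \<rho> $$ (1,1))"
    "Re (mtrace (\<rho> * (1\<^sub>m d - charged_effect d F))) \<le> trace_dist (F \<rho>) ket1"
proof -
  have F: "lin_map d 2 F" "trace_preserving d F"
    using assms(1) unfolding CPTP_def by simp_all
  have \<rho>: "\<rho> \<in> carrier_mat d d" "hermitian_fun d (\<lambda>a b. \<rho> $$ (a,b))"
    using densityD[OF assms(2)] psd_fun_hermitian by auto
  show "Re (mtrace (\<rho> * charged_effect d F)) = Re (F \<rho> $$ (1,1))"
    by (rule trace_charged_effect[OF F(1) \<rho>])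
  have "F \<rho> \<in> carrier_mat 2 2" "hermitian_mat (F \<rho>)" "mtrace (F \<rho>) = 1"
    using CPTP_density[OF assms] unfolding psd_def by simp_all
  then have "Re (F \<rho> $$ (0,0)) \<le> trace_dist (F \<rho>) ket1"
    by (simp add: trace_dist_ket1 real_sqrt_sum_squares_ge1)
  then show "Re (mtrace (\<rho> * (1\<^sub>m d - charged_effect d F))) \<le> trace_dist (F \<rho>) ket1"
    by (simp add: trace_charged_effect_complement[OF F \<rho>])
qed

section \<open>Measure-and-prepare channels\<close>

definition measure_prepare :: "nat \<Rightarrow> nat \<Rightarrow> (nat \<Rightarrow> nat \<Rightarrow> nat \<Rightarrow> complex) \<Rightarrow> complex mat \<Rightarrow> complex mat" where
  "measure_prepare d n K X = mat n n (\<lambda>(i,j). if i = j then trace_prod d (K i) (\<lambda>a b. X $$ (a,b)) else 0)"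

lemma measure_prepare_carrier: "measure_prepare d n K X \<in> carrier_mat n n"
  unfolding measure_prepare_def by simp

lemma measure_prepare_dim [simp]: "dim_row (measure_prepare d n K X) = n" "dim_col (measure_prepare d n K X) = n"
  unfolding measure_prepare_def by simp_all

lemma measure_prepare_index:
  "i < n \<Longrightarrow> j < n \<Longrightarrow>
    measure_prepare d n K X $$ (i,j) = (if i = j then trace_prod d (K i) (\<lambda>a b. X $$ (a,b)) else 0)"
  unfolding measure_prepare_def by simp

lemma lin_map_measure_prepare: "lin_map d n (measure_prepare d n K)"
  unfolding lin_map_def
proof (intro conjI ballI allI)
  fix A B :: "complex mat" assume "A \<in> carrier_mat d d" "B \<in> carrier_mat d d"
  then have "trace_prod d L (\<lambda>a b. (A + B) $$ (a,b)) =
      trace_prod d L (\<lambda>a b. A $$ (a,b)) + trace_prod d L (\<lambda>a b. B $$ (a,b))" for L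
    unfolding trace_prod_add_right[symmetric] by (intro trace_prod_cong) auto
  then show "measure_prepare d n K (A + B) = measure_prepare d n K A + measure_prepare d n K B"
    by (intro eq_matI) (auto simp: measure_prepare_index)
next
  fix A :: "complex mat" and c :: complex assume "A \<in> carrier_mat d d"
  then have "trace_prod d L (\<lambda>a b. (c \<cdot>\<^sub>m A) $$ (a,b)) = c * trace_prod d L (\<lambda>a b. A $$ (a,b))" for L
    unfolding trace_prod_scale_right[symmetric] by (intro trace_prod_cong) auto
  then show "measure_prepare d n K (c \<cdot>\<^sub>m A) = c \<cdot>\<^sub>m measure_prepare d n K A"
    by (intro eq_matI) (auto simp: measure_prepare_index)
qed (rule measure_prepare_carrier)

lemma trace_preserving_measure_prepare:
  assumes "\<And>a b. a < d \<Longrightarrow> b < d \<Longrightarrow> (\<Sum>s<n. K s a b) = (if a = b then 1 else 0)"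
  shows "trace_preserving d (measure_prepare d n K)"
  unfolding trace_preserving_def
proof
  fix A :: "complex mat" assume A: "A \<in> carrier_mat d d"
  have "mtrace (measure_prepare d n K A) = (\<Sum>s<n. trace_prod d (K s) (\<lambda>a b. A $$ (a,b)))"
    by (simp add: mtrace_carrier[OF measure_prepare_carrier] measure_prepare_index)
  also have "\<dots> = trace_prod d (\<lambda>a b. if a = b then 1 else 0) (\<lambda>a b. A $$ (a,b))"
    unfolding trace_prod_sum_left using assms by (intro trace_prod_cong) auto
  also have "\<dots> = mtrace A"
    unfolding trace_prod_id_left mtrace_carrier[OF A] ..
  finally show "mtrace (measure_prepare d n K A) = mtrace A" .
qed

lemma completely_positive_measure_prepare:
  assumes "\<And>s. s < n \<Longrightarrow> psd_fun d (K s)"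
  shows "completely_positive d n (measure_prepare d n K)"
  unfolding completely_positive_def
proof (intro allI impI)
  fix k and X :: "complex mat" assume "psd (k*d) X"
  then have X: "psd_fun (k*d) (\<lambda>i j. X $$ (i,j))"
    unfolding psd_iff_psd_fun by simp
  have "ampl k d n (measure_prepare d n K) X $$ (p,q) =
      (if p mod n = q mod n then trace_prod d (K (p mod n))
         (\<lambda>a b. X $$ (a + p div n * d, b + q div n * d)) else 0)"
    if "p < k*n" "q < k*n" for p q
  proof -
    have "n > 0" using that by (cases n) auto
    then show ?thesis
      using that by (auto simp: ampl_def measure_prepare_index blk_def add.commute intro: trace_prod_cong)
  qed
  then show "psd (k*n) (ampl k d n (measure_prepare d n K) X)"
    unfolding psd_iff_psd_fun
    by (auto simp: ampl_def intro: psd_fun_cong[OF psd_fun_measure_prepare_ampl[OF X assms]])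
qed

lemma CPTP_measure_prepare:
  assumes "\<And>s. s < n \<Longrightarrow> psd_fun d (K s)"
    and "\<And>a b. a < d \<Longrightarrow> b < d \<Longrightarrow> (\<Sum>s<n. K s a b) = (if a = b then 1 else 0)"
  shows "CPTP d n (measure_prepare d n K)"
  unfolding CPTP_def
  by (intro conjI lin_map_measure_prepare trace_preserving_measure_prepare
      completely_positive_measure_prepare assms)

text \<open>\<open>pi_M (1 / x)\<close> has weight \<open>x\<close> on \<open>|1\<rangle>\<close> also for \<open>x = 0\<close>, since \<open>1 / 0 = 0\<close>.\<close>
lemma measure_prepare_2_density:
  assumes "CPTP d 2 (measure_prepare d 2 K)" "\<rho> \<in> density d"
  shows "measure_prepare d 2 K \<rho> = pi_M (1 / Re (trace_prod d (K 1) (\<lambda>a b. \<rho> $$ (a,b))))"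
proof -
  define x where "x = Re (trace_prod d (K 1) (\<lambda>a b. \<rho> $$ (a,b)))"
  have "psd_fun 2 (\<lambda>i j. measure_prepare d 2 K \<rho> $$ (i,j))"
    using CPTP_density(1)[OF assms] unfolding psd_iff_psd_fun by simp
  from psd_fun_diag(1)[OF this, of 1]
  have x: "measure_prepare d 2 K \<rho> $$ (1,1) = of_real x"
    unfolding x_def by (simp add: measure_prepare_index)
  moreover have "measure_prepare d 2 K \<rho> $$ (0,0) + measure_prepare d 2 K \<rho> $$ (1,1) = 1"
    using CPTP_density(2)[OF assms] by (simp add: mtrace_carrier[OF measure_prepare_carrier] sum_less_2)
  ultimately show ?thesis
    unfolding x_def[symmetric]
    by (intro eq_matI) (auto simp: pi_M_def less_2_cases measure_prepare_index algebra_simps)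
qed

text \<open>Measure the test \<open>E\<close>, prepare \<open>|1\<rangle>\<close> on outcome \<open>E\<close>, and mix in \<open>|1\<rangle>\<langle>1|\<close> with weight \<open>\<delta>\<close>.\<close>
definition test_channel :: "nat \<Rightarrow> real \<Rightarrow> complex mat \<Rightarrow> complex mat \<Rightarrow> complex mat" where
  "test_channel d \<delta> E = measure_prepare d 2 (\<lambda>s. if s = 0
     then (\<lambda>a b. of_real (1 - \<delta>) * (1\<^sub>m d - E) $$ (a,b))
     else (\<lambda>a b. of_real (1 - \<delta>) * E $$ (a,b) + of_real \<delta> * (if a = b then 1 else 0)))"

lemma CPTP_test_channel:
  assumes E: "psd d E" "psd d (1\<^sub>m d - E)" and \<delta>: "0 \<le> \<delta>" "\<delta> \<le> 1"
  shows "CPTP d 2 (test_channel d \<delta> E)"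
  unfolding test_channel_def
proof (rule CPTP_measure_prepare)
  have Ec: "E \<in> carrier_mat d d" and pE: "psd_fun d (\<lambda>a b. E $$ (a,b))"
    and pIE: "psd_fun d (\<lambda>a b. (1\<^sub>m d - E) $$ (a,b))"
    using E unfolding psd_iff_psd_fun by simp_all
  have "psd_fun d (\<lambda>a b. of_real (1 - \<delta>) * (1\<^sub>m d - E) $$ (a,b))"
    using \<delta> by (intro psd_fun_scale pIE) simp
  moreover have "psd_fun d (\<lambda>a b. of_real (1 - \<delta>) * E $$ (a,b) + of_real \<delta> * (if a = b then 1 else 0))"
    using \<delta> by (intro psd_fun_lincomb pE psd_fun_id) simp_all
  ultimately show "psd_fun d (if s = 0
     then (\<lambda>a b. of_real (1 - \<delta>) * (1\<^sub>m d - E) $$ (a,b))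
     else (\<lambda>a b. of_real (1 - \<delta>) * E $$ (a,b) + of_real \<delta> * (if a = b then 1 else 0)))"
    for s :: nat
    by simp
  show "(\<Sum>s<(2::nat). (if s = 0
     then (\<lambda>a b. of_real (1 - \<delta>) * (1\<^sub>m d - E) $$ (a,b))
     else (\<lambda>a b. of_real (1 - \<delta>) * E $$ (a,b) + of_real \<delta> * (if a = b then 1 else 0))) a b)
      = (if a = b then 1 else 0)" if "a < d" "b < d" for a b
    unfolding sum_less_2 using Ec that by (simp add: algebra_simps)
qed

lemma test_channel_density:
  assumes "psd d E" "psd d (1\<^sub>m d - E)" "0 \<le> \<delta>" "\<delta> \<le> 1" "\<rho> \<in> density d"
  shows "test_channel d \<delta> E \<rho> = pi_M (1 / ((1 - \<delta>) * Re (mtrace (\<rho> * E)) + \<delta>))"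
proof -
  have "E \<in> carrier_mat d d" using assms(1) unfolding psd_def by simp
  then show ?thesis
    using measure_prepare_2_density[OF CPTP_test_channel[OF assms(1-4), unfolded test_channel_def] assms(5)]
      densityD[OF assms(5)]
    by (simp add: test_channel_def trace_prod_lincomb_left trace_prod_id_left mtrace_mult)
qed

lemma trace_dist_test_channel:
  assumes E: "psd d E" "psd d (1\<^sub>m d - E)" and \<delta>: "0 \<le> \<delta>" "\<delta> \<le> 1" and \<rho>: "\<rho> \<in> density d"
  shows "trace_dist (test_channel d \<delta> E \<rho>) ket1 \<le> Re (mtrace (\<rho> * (1\<^sub>m d - E)))"
proof -
  define s where "s = Re (mtrace (\<rho> * (1\<^sub>m d - E)))"
  have "E \<in> carrier_mat d d" using E(1) unfolding psd_def by simp
  then have "Re (mtrace (\<rho> * E)) = 1 - s"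
    using mtrace_mult_one_minus[OF densityD(1)[OF \<rho>]] \<rho> unfolding s_def density_def by simp
  then have "1 - ((1 - \<delta>) * Re (mtrace (\<rho> * E)) + \<delta>) = (1 - \<delta>) * s"
    unfolding \<open>Re (mtrace (\<rho> * E)) = 1 - s\<close> by (simp add: algebra_simps)
  moreover have "0 \<le> s" unfolding s_def by (rule mtrace_density_psd_nonneg[OF \<rho> E(2)])
  then have "0 \<le> (1 - \<delta>) * s" "(1 - \<delta>) * s \<le> s"
    using \<delta> by (simp_all add: mult_left_le_one_le)
  ultimately show ?thesis
    unfolding test_channel_density[OF E \<delta> \<rho>] trace_dist_pi_M_ket1 s_def[symmetric] by simp
qed

lemma test_channel_Pi_M:
  assumes E: "psd d E" "psd d (1\<^sub>m d - E)" and \<delta>: "0 < \<delta>" "\<delta> \<le> 1" "(1 - \<delta>) * q + \<delta> = 1 / M"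
    and "0 < M" and \<tau>: "\<tau> \<in> density d" "Re (mtrace (\<tau> * E)) \<le> q"
  shows "test_channel d \<delta> E \<tau> \<in> Pi_M M"
proof -
  define p where "p = (1 - \<delta>) * Re (mtrace (\<tau> * E)) + \<delta>"
  have "0 \<le> (1 - \<delta>) * Re (mtrace (\<tau> * E))"
    using mtrace_density_psd_nonneg[OF \<tau>(1) E(1)] \<delta> by simp
  moreover have "(1 - \<delta>) * Re (mtrace (\<tau> * E)) \<le> (1 - \<delta>) * q"
    using \<tau>(2) \<delta> by (intro mult_left_mono) simp_all
  ultimately have "0 < p" "p \<le> 1 / M" unfolding p_def using \<delta> by linarith+
  then have "M \<le> 1 / p" using \<open>0 < M\<close> by (simp add: field_simps)
  then show ?thesis
    unfolding test_channel_density[OF E less_imp_le[OF \<delta>(1)] \<delta>(2) \<tau>(1), folded p_def] Pi_M_def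
    by blast
qed

section \<open>Extractable work and hypothesis testing\<close>

lemma ereal_le_by_dense:
  fixes W :: ereal
  assumes "1 \<le> W" "\<And>M. 1 < M \<Longrightarrow> M < b \<Longrightarrow> ereal M \<le> W"
  shows "ereal b \<le> W"
proof (cases W)
  case (real w)
  show ?thesis
  proof (cases "1 < b")
    case True
    have "b \<le> w" by (rule dense_le_bounded[OF True]) (use assms(2) real in simp)
    then show ?thesis using real by simp
  next
    case False
    then show ?thesis using assms(1) real by (simp add: one_ereal_def)
  qed
qed (use assms(1) in auto)

text \<open>\<open>W\<close> and \<open>I\<close> stand for \<open>2\<^sup>\<beta>\<^sup>W\<close> and \<open>2\<^sup>-\<^sup>D\<close>: the battery parameter \<open>M > 1\<close> is achievable when \<open>I < 1/M\<close>
  and only if \<open>I \<le> 1/M\<close>, so \<open>W = 1/I\<close>, read as \<open>\<infinity>\<close> for \<open>I = 0\<close>.\<close>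
lemma elog_Sup_eq_neg_elog_Inf:
  fixes I :: ereal
  assumes I: "0 \<le> I" "I \<le> 1"
    and only_if: "\<And>M. 1 < M \<Longrightarrow> P M \<Longrightarrow> I \<le> ereal (1 / M)"
    and "if": "\<And>M. 1 < M \<Longrightarrow> I < ereal (1 / M) \<Longrightarrow> P M"
  shows "elog (Sup ({1} \<union> {ereal M | M. M > 1 \<and> P M})) = - elog I"
proof -
  define W where "W = Sup ({1} \<union> {ereal M | M. M > 1 \<and> P M})"
  have W1: "1 \<le> W" unfolding W_def by (rule Sup_upper) simp
  have W_ge: "ereal M \<le> W" if "1 < M" "I < ereal (1 / M)" for M
    unfolding W_def using "if"[OF that] that(1) by (intro Sup_upper) blast
  show ?thesis
  proof (cases "I = 0")
    case True
    have "W = \<infinity>"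
    proof (rule ereal_top)
      show "ereal B \<le> W" for B
        by (rule ereal_le_by_dense[OF W1]) (simp add: W_ge True)
    qed
    then show ?thesis using True unfolding W_def by (simp add: elog_def)
  next
    case False
    then obtain r where Ir: "I = ereal r" and r: "0 < r" "r \<le> 1"
      using I by (cases I) auto
    have "W \<le> ereal (1 / r)" unfolding W_def
    proof (rule Sup_least)
      fix x assume "x \<in> {1} \<union> {ereal M | M. M > 1 \<and> P M}"
      then show "x \<le> ereal (1 / r)"
        using only_if r Ir by (auto simp: field_simps)
    qed
    moreover have "ereal (1 / r) \<le> W"
      by (rule ereal_le_by_dense[OF W1]) (use W_ge Ir r in \<open>simp add: field_simps\<close>)
    ultimately have "W = ereal (1 / r)" by simp
    then show ?thesis unfolding W_def Ir using r by (simp add: elog_def log_recip)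
  qed
qed

definition sup_prob :: "complex mat set \<Rightarrow> complex mat \<Rightarrow> ereal" where
  "sup_prob S A = Sup ({0} \<union> {ereal (Re (mtrace (\<sigma> * A))) | \<sigma>. \<sigma> \<in> S})"

definition test_feasible :: "nat \<Rightarrow> real \<Rightarrow> complex mat set \<Rightarrow> complex mat \<Rightarrow> bool" where
  "test_feasible d \<epsilon> \<P> A \<longleftrightarrow> psd d A \<and> psd d (1\<^sub>m d - A) \<and> sup_prob \<P> (1\<^sub>m d - A) \<le> ereal \<epsilon>"

lemma Dmin_eq_Inf_sup_prob:
  "Dmin d \<epsilon> \<P> \<E> = - elog (Inf {sup_prob \<E> A | A. test_feasible d \<epsilon> \<P> A})"
  unfolding Dmin_def sup_prob_def test_feasible_def ..

lemma sup_prob_nonneg: "0 \<le> sup_prob S A"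
  unfolding sup_prob_def by (rule Sup_upper) simp

lemma sup_prob_le_iff: "0 \<le> c \<Longrightarrow> sup_prob S A \<le> ereal c \<longleftrightarrow> (\<forall>\<sigma>\<in>S. Re (mtrace (\<sigma> * A)) \<le> c)"
  unfolding sup_prob_def by (auto simp: Sup_le_iff)

lemma sup_prob_less_ereal:
  assumes "sup_prob S A < ereal c"
  obtains q where "0 \<le> q" "q < c" "\<And>\<sigma>. \<sigma> \<in> S \<Longrightarrow> Re (mtrace (\<sigma> * A)) \<le> q"
proof -
  obtain q where q: "sup_prob S A = ereal q"
    using assms sup_prob_nonneg[of S A] by (cases "sup_prob S A") auto
  show ?thesis
  proof
    show "0 \<le> q" "q < c" using q assms sup_prob_nonneg[of S A] by simp_all
    fix \<sigma> assume "\<sigma> \<in> S"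
    then show "Re (mtrace (\<sigma> * A)) \<le> q"
      using sup_prob_le_iff[of q S A] q \<open>0 \<le> q\<close> by simp
  qed
qed

lemma test_feasible_one:
  assumes "0 \<le> \<epsilon>" "\<P> \<subseteq> density d"
  shows "test_feasible d \<epsilon> \<P> (1\<^sub>m d)"
proof -
  have zero: "1\<^sub>m d - 1\<^sub>m d = (0\<^sub>m d d :: complex mat)" by (rule eq_matI) auto
  have "psd d (1\<^sub>m d)" unfolding one_mat_def by (rule psd_mat_of_fun[OF psd_fun_id])
  moreover have "psd d (0\<^sub>m d d)"
    unfolding psd_iff_psd_fun by (simp add: psd_fun_def hermitian_fun_def qform_def)
  moreover have "mtrace (\<rho> * 0\<^sub>m d d) = 0" if "\<rho> \<in> \<P>" for \<rho>
  proof -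
    have "\<rho> \<in> carrier_mat d d" using densityD(1) assms(2) that by blast
    then show ?thesis by (simp add: right_mult_zero_mat mtrace_def)
  qed
  ultimately show ?thesis
    unfolding test_feasible_def sup_prob_le_iff[OF assms(1)] zero using assms(1) by simp
qed

lemma sup_prob_one:
  assumes "\<E> \<subseteq> density d"
  shows "sup_prob \<E> (1\<^sub>m d) \<le> 1"
proof -
  have "mtrace (\<sigma> * 1\<^sub>m d) = 1" if "\<sigma> \<in> \<E>" for \<sigma>
    using assms that densityD(1)[of \<sigma> d] unfolding density_def by auto
  then show ?thesis using sup_prob_le_iff[of 1 \<E> "1\<^sub>m d"] by (simp add: one_ereal_def)
qed

lemma test_of_channel:
  assumes "CPTP d 2 F" "\<P> \<subseteq> density d" "\<E> \<subseteq> density d" "0 \<le> \<epsilon>" "1 < M"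
    and "\<forall>\<rho>\<in>\<P>. trace_dist (F \<rho>) ket1 \<le> \<epsilon>" "\<forall>\<tau>\<in>\<E>. F \<tau> \<in> Pi_M M"
  shows "test_feasible d \<epsilon> \<P> (charged_effect d F)" "sup_prob \<E> (charged_effect d F) \<le> ereal (1 / M)"
proof -
  have "Re (mtrace (\<rho> * (1\<^sub>m d - charged_effect d F))) \<le> \<epsilon>" if "\<rho> \<in> \<P>" for \<rho>
  proof -
    have "Re (mtrace (\<rho> * (1\<^sub>m d - charged_effect d F))) \<le> trace_dist (F \<rho>) ket1"
      using charged_effect_density(2)[OF assms(1)] assms(2) that by blast
    also have "\<dots> \<le> \<epsilon>" using assms(6) that by blast
    finally show ?thesis .
  qed
  then show "test_feasible d \<epsilon> \<P> (charged_effect d F)"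
    unfolding test_feasible_def sup_prob_le_iff[OF assms(4)] using charged_effect_psd[OF assms(1)] by blast
  have "Re (mtrace (\<tau> * charged_effect d F)) \<le> 1 / M" if "\<tau> \<in> \<E>" for \<tau>
  proof -
    have "F \<tau> \<in> Pi_M M" using assms(7) that by blast
    then obtain M' where M': "M \<le> M'" "F \<tau> = pi_M M'" unfolding Pi_M_def by auto
    have "Re (mtrace (\<tau> * charged_effect d F)) = Re (F \<tau> $$ (1,1))"
      using charged_effect_density(1)[OF assms(1)] assms(3) that by blast
    also have "\<dots> = 1 / M'" unfolding M'(2) pi_M_def by simp
    also have "\<dots> \<le> 1 / M" using M'(1) assms(5) by (simp add: frac_le)
    finally show ?thesis .
  qed
  then show "sup_prob \<E> (charged_effect d F) \<le> ereal (1 / M)"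
    using assms(5) by (simp add: sup_prob_le_iff)
qed

text \<open>The mixing weight \<open>\<delta>\<close> solves \<open>(1 - \<delta>) q + \<delta> = 1/M\<close>, which raises the weight of \<open>|1\<rangle>\<close> on each \<open>\<tau>\<close>
  from at most \<open>q\<close> to at most \<open>1/M\<close> and makes it positive.\<close>
lemma channel_of_feasible_test:
  assumes "test_feasible d \<epsilon> \<P> A" "sup_prob \<E> A < ereal (1 / M)"
    and "\<P> \<subseteq> density d" "\<E> \<subseteq> density d" "0 \<le> \<epsilon>" "1 < M"
  shows "\<exists>F. CPTP d 2 F \<and> (\<forall>\<rho>\<in>\<P>. trace_dist (F \<rho>) ket1 \<le> \<epsilon>) \<and> (\<forall>\<tau>\<in>\<E>. F \<tau> \<in> Pi_M M)"
proof -
  obtain q where q: "0 \<le> q" "q < 1 / M" "\<And>\<tau>. \<tau> \<in> \<E> \<Longrightarrow> Re (mtrace (\<tau> * A)) \<le> q"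
    using sup_prob_less_ereal[OF assms(2)] by blast
  have A: "psd d A" "psd d (1\<^sub>m d - A)" "\<And>\<rho>. \<rho> \<in> \<P> \<Longrightarrow> Re (mtrace (\<rho> * (1\<^sub>m d - A))) \<le> \<epsilon>"
    using assms(1,5) unfolding test_feasible_def sup_prob_le_iff[OF assms(5)] by auto
  define \<delta> where "\<delta> = (1 / M - q) / (1 - q)"
  have "1 / M < 1" using assms(6) by simp
  then have "0 < \<delta>" "\<delta> \<le> 1" "\<delta> * (1 - q) = 1 / M - q"
    unfolding \<delta>_def using q(1,2) by simp_all
  then have \<delta>: "0 < \<delta>" "\<delta> \<le> 1" "(1 - \<delta>) * q + \<delta> = 1 / M"
    by (simp_all add: algebra_simps)
  have "trace_dist (test_channel d \<delta> A \<rho>) ket1 \<le> \<epsilon>" if "\<rho> \<in> \<P>" for \<rho>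
    using trace_dist_test_channel[OF A(1,2) _ \<delta>(2), of \<rho>] A(3)[OF that] \<delta>(1) assms(3) that by auto
  moreover have "test_channel d \<delta> A \<tau> \<in> Pi_M M" if "\<tau> \<in> \<E>" for \<tau>
    using test_channel_Pi_M[OF A(1,2) \<delta>] q(3)[OF that] assms(4,6) that by auto
  ultimately show ?thesis
    using CPTP_test_channel[OF A(1,2) _ \<delta>(2)] \<delta>(1) by auto
qed

theorem theorem6:
  fixes d :: nat and \<epsilon> :: real and \<P> \<E> :: "complex mat set"
  assumes "0 \<le> \<epsilon>" and "\<epsilon> < 1"
    and "\<P> \<subseteq> density d" and "\<E> \<subseteq> density d"
  shows "work_GPO d \<epsilon> \<P> \<E> = Dmin d \<epsilon> \<P> \<E>"
proof -
  define I where "I = Inf {sup_prob \<E> A | A. test_feasible d \<epsilon> \<P> A}"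
  have "work_GPO d \<epsilon> \<P> \<E> = - elog I"
    unfolding work_GPO_def
  proof (rule elog_Sup_eq_neg_elog_Inf)
    show "0 \<le> I" unfolding I_def by (auto intro!: Inf_greatest sup_prob_nonneg)
    show "I \<le> 1" unfolding I_def
      using test_feasible_one[OF assms(1,3)] sup_prob_one[OF assms(4)] by (blast intro: Inf_lower2)
  next
    fix M :: real assume "1 < M"
      "\<exists>F. CPTP d 2 F \<and> (\<forall>\<rho>\<in>\<P>. trace_dist (F \<rho>) ket1 \<le> \<epsilon>) \<and> (\<forall>\<tau>\<in>\<E>. F \<tau> \<in> Pi_M M)"
    then show "I \<le> ereal (1 / M)"
      unfolding I_def using test_of_channel[OF _ assms(3,4,1)] by (blast intro: Inf_lower2)
  next
    fix M :: real assume "1 < M" "I < ereal (1 / M)"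
    then show "\<exists>F. CPTP d 2 F \<and> (\<forall>\<rho>\<in>\<P>. trace_dist (F \<rho>) ket1 \<le> \<epsilon>) \<and> (\<forall>\<tau>\<in>\<E>. F \<tau> \<in> Pi_M M)"
      unfolding I_def Inf_less_iff
      using channel_of_feasible_test[OF _ _ assms(3,4,1)] by blast
  qed
  then show ?thesis unfolding Dmin_eq_Inf_sup_prob I_def .
qed

end
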